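(* Let $e_1<e_2<e_3<e_4$ be distinct reals. On $T^*S^3=\{(\mathbf x,\mathbf y)\in\mathbb R^8:\mathbf x\cdot\mathbf x=1,\mathbf x\cdot\mathbf y=0\}$ let $\ell_{ij}=x_iy_j-x_jy_i$, let $F_i=\sum_{j\ne i}\frac{\ell_{ij}^2}{e_i-e_j}$ ($i=1,\dots,4$, with $\ell_{ji}=-\ell_{ij}$) be the Uhlenbeck integrals, and let $\eta_1=\sum_{i<j}\ell_{ij}^2\sum_{k\ne i,j}e_k$, $\eta_2=\sum_{i<j}\ell_{ij}^2\prod_{k\ne i,j}e_k$. On the energy level $2H=\mathbf y\cdot\mathbf y=1$, $F_i=0$ if and only if $\eta_2-e_i(\eta_1-e_i)=0$; i.e. $F_i$ vanishes exactly along the line $\mathcal L_i:\eta_2-e_i(\eta_1-e_i)=0$.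
   Context: The condition $2H=1$ (i.e. $\sum_{i<j}\ell_{ij}^2=1$) is the normalisation used for the line $\mathcal L_i$. *)

theory Defs
  imports Complex_Main
begin

text \<open>Points of R^8 are pairs of coordinate functions x, y indexed by 1..4.\<close>

definition ell :: "(nat \<Rightarrow> real) \<Rightarrow> (nat \<Rightarrow> real) \<Rightarrow> nat \<Rightarrow> nat \<Rightarrow> real" where
  "ell x y i j = x i * y j - x j * y i"

definition uhlF :: "(nat \<Rightarrow> real) \<Rightarrow> (nat \<Rightarrow> real) \<Rightarrow> (nat \<Rightarrow> real) \<Rightarrow> nat \<Rightarrow> real" where
  "uhlF e x y i = (\<Sum>j\<in>{1..4} - {i}. (ell x y i j)\<^sup>2 / (e i - e j))"

definition eta1 :: "(nat \<Rightarrow> real) \<Rightarrow> (nat \<Rightarrow> real) \<Rightarrow> (nat \<Rightarrow> real) \<Rightarrow> real" where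
  "eta1 e x y = (\<Sum>(i,j)\<in>{(i,j). 1 \<le> i \<and> i < j \<and> j \<le> 4}.
      (ell x y i j)\<^sup>2 * (\<Sum>k\<in>{1..4} - {i,j}. e k))"

definition eta2 :: "(nat \<Rightarrow> real) \<Rightarrow> (nat \<Rightarrow> real) \<Rightarrow> (nat \<Rightarrow> real) \<Rightarrow> real" where
  "eta2 e x y = (\<Sum>(i,j)\<in>{(i,j). 1 \<le> i \<and> i < j \<and> j \<le> 4}.
      (ell x y i j)\<^sup>2 * (\<Prod>k\<in>{1..4} - {i,j}. e k))"

end

theory Submission
  imports Defs
begin

text \<open>
  For each pair \<open>j < k\<close> with complementary pair \<open>{m, n}\<close>, the coefficient of
  \<open>\<ell>\<^sub>j\<^sub>k\<^sup>2\<close> in \<open>\<eta>\<^sub>2 - t \<eta>\<^sub>1 + t\<^sup>2 \<Sum> \<ell>\<^sup>2\<close> is \<open>(t - e\<^sub>m)(t - e\<^sub>n)\<close>.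
  At \<open>t = e\<^sub>i\<close> only the pairs containing \<open>i\<close> survive, and their sum is \<open>F\<^sub>i\<close> times
  \<open>\<Prod>(e\<^sub>i - e\<^sub>k)\<close> over \<open>k \<noteq> i\<close>. On the energy level Lagrange's identity gives
  \<open>\<Sum> \<ell>\<^sup>2 = |x|\<^sup>2|y|\<^sup>2 - (x\<cdot>y)\<^sup>2 = 1\<close>, and the product is nonzero because the \<open>e\<^sub>k\<close> are distinct.
\<close>

lemma ell_sq_swap: "j < i \<Longrightarrow> (ell x y i j)\<^sup>2 = (ell x y j i)\<^sup>2"
  by (simp add: ell_def power2_eq_square algebra_simps)

lemma atLeastAtMost_1_4: "{1..4::nat} = {1,2,3,4}"
  by auto

lemma pairs_1_4: "{(i,j). 1 \<le> i \<and> i < j \<and> j \<le> (4::nat)} = {(1,2),(1,3),(1,4),(2,3),(2,4),(3,4)}"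
  by auto

lemma sum_sq_ell_eq_Lagrange:
  "(\<Sum>(i,j)\<in>{(i,j). 1 \<le> i \<and> i < j \<and> j \<le> 4}. (ell x y i j)\<^sup>2)
     = (\<Sum>k=1..4. x k * x k) * (\<Sum>k=1..4. y k * y k) - (\<Sum>k=1..4. x k * y k)\<^sup>2"
  unfolding pairs_1_4 atLeastAtMost_1_4 ell_def by (simp add: power2_eq_square algebra_simps)

lemma prod_diff_card_2:
  fixes e :: "'a \<Rightarrow> 'b::comm_ring_1"
  assumes "card S = 2"
  shows "(\<Prod>m\<in>S. t - e m) = t\<^sup>2 - t * (\<Sum>m\<in>S. e m) + (\<Prod>m\<in>S. e m)"
proof -
  obtain a b where "S = {a, b}" "a \<noteq> b"
    using assms by (auto simp: card_2_iff)
  then show ?thesis by (simp add: power2_eq_square algebra_simps)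
qed

lemma eta_quadratic:
  "eta2 e x y - t * (eta1 e x y - t * (\<Sum>(i,j)\<in>{(i,j). 1 \<le> i \<and> i < j \<and> j \<le> 4}. (ell x y i j)\<^sup>2))
     = (\<Sum>(i,j)\<in>{(i,j). 1 \<le> i \<and> i < j \<and> j \<le> 4}. (ell x y i j)\<^sup>2 * (\<Prod>m\<in>{1..4} - {i,j}. t - e m))"
proof -
  have "(\<Prod>m\<in>{1..4} - {i,j}. t - e m) = t\<^sup>2 - t * (\<Sum>m\<in>{1..4} - {i,j}. e m) + (\<Prod>m\<in>{1..4} - {i,j}. e m)"
    if "(i,j) \<in> {(i,j). 1 \<le> i \<and> i < j \<and> j \<le> (4::nat)}" for i j
    using that by (intro prod_diff_card_2) (simp add: card_Diff_subset)
  then have "(\<Sum>(i,j)\<in>{(i,j). 1 \<le> i \<and> i < j \<and> j \<le> 4}. (ell x y i j)\<^sup>2 * (\<Prod>m\<in>{1..4} - {i,j}. t - e m))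
      = (\<Sum>(i,j)\<in>{(i,j). 1 \<le> i \<and> i < j \<and> j \<le> 4}. (ell x y i j)\<^sup>2 *
          (t\<^sup>2 - t * (\<Sum>m\<in>{1..4} - {i,j}. e m) + (\<Prod>m\<in>{1..4} - {i,j}. e m)))"
    by (intro sum.cong) auto
  also have "\<dots> = eta2 e x y - t * (eta1 e x y - t * (\<Sum>(i,j)\<in>{(i,j). 1 \<le> i \<and> i < j \<and> j \<le> 4}. (ell x y i j)\<^sup>2))"
    unfolding eta1_def eta2_def
    by (simp add: case_prod_beta sum_distrib_left sum_subtractf[symmetric] sum.distrib[symmetric]
        power2_eq_square algebra_simps)
  finally show ?thesis ..
qed

lemma sum_divide_mult_prod:
  fixes w d :: "'a \<Rightarrow> 'b::field"
  assumes "finite S" and "\<And>k. k \<in> S \<Longrightarrow> d k \<noteq> 0"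
  shows "(\<Sum>k\<in>S. w k / d k) * (\<Prod>k\<in>S. d k) = (\<Sum>k\<in>S. w k * (\<Prod>l\<in>S - {k}. d l))"
  unfolding sum_distrib_right
proof (rule sum.cong)
  fix k assume "k \<in> S"
  then show "w k / d k * prod d S = w k * prod d (S - {k})"
    using assms by (simp add: prod.remove)
qed simp

lemma pair_sum_at_e_i:
  assumes "i \<in> {1..4}"
  shows "(\<Sum>(j,k)\<in>{(j,k). 1 \<le> j \<and> j < k \<and> k \<le> 4}. (ell x y j k)\<^sup>2 * (\<Prod>m\<in>{1..4} - {j,k}. e i - e m))
    = (\<Sum>k\<in>{1..4} - {i}. (ell x y i k)\<^sup>2 * (\<Prod>m\<in>{1..4} - {i,k}. e i - e m))"
  using assms unfolding pairs_1_4 atLeastAtMost_1_4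
  by (auto simp: insert_Diff_if ell_sq_swap)

lemma prod_diff_nonzero:
  fixes e :: "nat \<Rightarrow> real"
  assumes "e 1 < e 2" and "e 2 < e 3" and "e 3 < e 4" and "i \<in> {1..4}"
  shows "(\<Prod>k\<in>{1..4} - {i}. e i - e k) \<noteq> 0"
  using assms unfolding atLeastAtMost_1_4 by (auto simp: insert_Diff_if)

theorem corollary2:
  fixes e x y :: "nat \<Rightarrow> real" and i :: nat
  assumes "e 1 < e 2" and "e 2 < e 3" and "e 3 < e 4"
    and "(\<Sum>k=1..4. x k * x k) = 1"
    and "(\<Sum>k=1..4. x k * y k) = 0"
    and "(\<Sum>k=1..4. y k * y k) = 1"
    and "i \<in> {1..4}"
  shows "uhlF e x y i = 0 \<longleftrightarrow> eta2 e x y - e i * (eta1 e x y - e i) = 0"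
proof -
  have "(\<Sum>(j,k)\<in>{(j,k). 1 \<le> j \<and> j < k \<and> k \<le> 4}. (ell x y j k)\<^sup>2) = 1"
    unfolding sum_sq_ell_eq_Lagrange using assms(4-6) by simp
  then have "eta2 e x y - e i * (eta1 e x y - e i)
      = (\<Sum>k\<in>{1..4} - {i}. (ell x y i k)\<^sup>2 * (\<Prod>m\<in>{1..4} - {i,k}. e i - e m))"
    using eta_quadratic[of e x y "e i"] pair_sum_at_e_i[OF assms(7)] by simp
  also have "\<dots> = uhlF e x y i * (\<Prod>k\<in>{1..4} - {i}. e i - e k)"
    unfolding uhlF_def using prod_diff_nonzero[OF assms(1-3,7)]
    by (subst sum_divide_mult_prod) (auto simp: Diff_insert2[symmetric])
  finally show ?thesis
    using prod_diff_nonzero[OF assms(1-3,7)] by simp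
qed

end
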